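(* Let $G$ be hyperbolic relative to $P_1,\dots,P_s$, and let $T_{\rm thick}\subset T$ be as in the context. Let $u,v$ be distinct non-parabolic points lying in the same connected component of $\partial G$. Then there exists $w\in\partial G$ such that $(u,v,w)\in T_{\rm thick}$.
   Context: Relative hyperbolicity is in the sense of Bowditch; $\partial G$ is the Bowditch boundary, a compact Hausdorff space on which $G$ acts as a convergence group; parabolic points are the fixed points of conjugates of the $P_i$. $T=\{(x,y,z)\in(\partial G)^3:x\neq y\neq z\neq x\}$ is triple space with the diagonal $G$-action. $T\cup\partial G$ is topologized so that a sequence $(u_i,v_i,w_i)$ in $T$ converges to $x\in\partial G$ iff at least two of the sequences $(u_i),(v_i),(w_i)$ converge to $x$. Let $p_1,\dots,p_s$ be representatives of the $G$-orbits of parabolic points with $P_i=\mathrm{Stab}_G(p_i)$. A cusp neighborhood of $p_i$ is a subset $T-\mathrm{Stab}_G(p_i)K$, where $K$ is a compact subset of $T\cup\partial G$ containing an open neighborhood of some compact $C\subset\partial G-\{p_i\}$ with $\mathrm{Stab}_G(p_i)C=\partial G-\{p_i\}$. Open cusp neighborhoods $B_i$ of $p_i$ ($i=1,\dots,s$) are chosen so that the sets $gB_i$ ($g\in G/P_i$, $i=1,\dots,s$) are pairwise disjoint and $T_{\rm thick}:=T-\bigcup_{i=1}^s\bigcup_{g\in G}gB_i$ projects onto a compact subspace of $G\backslash T$. *)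

theory Defs
  imports "HOL-Analysis.Analysis" "HOL-Algebra.Group_Action"
begin

text \<open>Throughout: G is a group (HOL-Algebra), X a topology whose carrier is the
  boundary M, and act g is the homeomorphism of M given by g.\<close>

definition diag_act :: "('g \<Rightarrow> 'a \<Rightarrow> 'a) \<Rightarrow> 'g \<Rightarrow> 'a \<times> 'a \<times> 'a \<Rightarrow> 'a \<times> 'a \<times> 'a" where
  "diag_act act g t = (act g (fst t), act g (fst (snd t)), act g (snd (snd t)))"

definition triples :: "'a topology \<Rightarrow> ('a \<times> 'a \<times> 'a) set" where
  "triples X = {(x, y, z). x \<in> topspace X \<and> y \<in> topspace X \<and> z \<in> topspace X
                          \<and> x \<noteq> y \<and> y \<noteq> z \<and> z \<noteq> x}"

definition triple_top :: "'a topology \<Rightarrow> ('a \<times> 'a \<times> 'a) topology" where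
  "triple_top X = subtopology (prod_topology X (prod_topology X X)) (triples X)"

definition two_in :: "'a set \<Rightarrow> 'a \<times> 'a \<times> 'a \<Rightarrow> bool" where
  "two_in U t \<longleftrightarrow> (fst t \<in> U \<and> fst (snd t) \<in> U) \<or> (fst (snd t) \<in> U \<and> snd (snd t) \<in> U)
                  \<or> (fst t \<in> U \<and> snd (snd t) \<in> U)"

text \<open>The topology on T \<union> \<partial>G (boundary points are Inl x, triples are Inr t):
  T carries the product topology and is open; a basic neighbourhood of a boundary point x
  is U \<union> {t \<in> T. at least two coordinates of t lie in U} for U open in \<partial>G containing x.\<close>
definition compactified_triples :: "'a topology \<Rightarrow> ('a + ('a \<times> 'a \<times> 'a)) topology" where
  "compactified_triples X = topology (\<lambda>S.
      S \<subseteq> Inl ` topspace X \<union> Inr ` triples X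
    \<and> openin (triple_top X) (Inr -` S)
    \<and> (\<forall>x. Inl x \<in> S \<longrightarrow> (\<exists>U. openin X U \<and> x \<in> U \<and>
            Inl ` U \<union> Inr ` {t \<in> triples X. two_in U t} \<subseteq> S)))"

text \<open>Bowditch: G acts as a convergence group on the compact Hausdorff space M iff the
  induced action on the space of distinct triples is properly discontinuous.\<close>
definition convergence_action :: "('g, 'b) monoid_scheme \<Rightarrow> 'a topology \<Rightarrow> ('g \<Rightarrow> 'a \<Rightarrow> 'a) \<Rightarrow> bool" where
  "convergence_action G X act \<longleftrightarrow>
     group_action G (topspace X) act
   \<and> (\<forall>g \<in> carrier G. continuous_map X X (act g))
   \<and> compact_space X \<and> Hausdorff_space X
   \<and> (\<forall>K. compactin (triple_top X) K \<longrightarrow>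
          finite {g \<in> carrier G. diag_act act g ` K \<inter> K \<noteq> {}})"

definition loxodromic :: "('g, 'b) monoid_scheme \<Rightarrow> 'a topology \<Rightarrow> ('g \<Rightarrow> 'a \<Rightarrow> 'a) \<Rightarrow> 'g \<Rightarrow> bool" where
  "loxodromic G X act g \<longleftrightarrow> g \<in> carrier G \<and> (\<forall>n::nat. n > 0 \<longrightarrow> g [^]\<^bsub>G\<^esub> n \<noteq> \<one>\<^bsub>G\<^esub>)
     \<and> card {x \<in> topspace X. act g x = x} = 2"

definition parabolic_point :: "('g, 'b) monoid_scheme \<Rightarrow> 'a topology \<Rightarrow> ('g \<Rightarrow> 'a \<Rightarrow> 'a) \<Rightarrow> 'a \<Rightarrow> bool" where
  "parabolic_point G X act p \<longleftrightarrow> p \<in> topspace X \<and> infinite (stabilizer G act p)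
     \<and> (\<forall>g \<in> stabilizer G act p. \<not> loxodromic G X act g)"

definition bounded_parabolic_point :: "('g, 'b) monoid_scheme \<Rightarrow> 'a topology \<Rightarrow> ('g \<Rightarrow> 'a \<Rightarrow> 'a) \<Rightarrow> 'a \<Rightarrow> bool" where
  "bounded_parabolic_point G X act p \<longleftrightarrow> parabolic_point G X act p
     \<and> (\<exists>C. compactin X C \<and> C \<subseteq> topspace X - {p}
           \<and> (\<Union>g \<in> stabilizer G act p. act g ` C) = topspace X - {p})"

definition conical_limit_point :: "('g, 'b) monoid_scheme \<Rightarrow> 'a topology \<Rightarrow> ('g \<Rightarrow> 'a \<Rightarrow> 'a) \<Rightarrow> 'a \<Rightarrow> bool" where
  "conical_limit_point G X act x \<longleftrightarrow> x \<in> topspace X \<and>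
     (\<exists>g a b. (\<forall>n. g n \<in> carrier G) \<and> a \<in> topspace X \<and> b \<in> topspace X \<and> a \<noteq> b
        \<and> limitin X (\<lambda>n. act (g n) x) a sequentially
        \<and> (\<forall>y \<in> topspace X - {x}. limitin X (\<lambda>n. act (g n) y) b sequentially))"

text \<open>Bowditch boundary: G acts on X as a geometrically finite convergence group,
  p 0, ..., p (s-1) are representatives of the G-orbits of parabolic points
  (so P_i = Stab(p i) are the peripheral subgroups).\<close>
definition bowditch_boundary ::
  "('g, 'b) monoid_scheme \<Rightarrow> 'a topology \<Rightarrow> ('g \<Rightarrow> 'a \<Rightarrow> 'a) \<Rightarrow> nat \<Rightarrow> (nat \<Rightarrow> 'a) \<Rightarrow> bool" where
  "bowditch_boundary G X act s p \<longleftrightarrow>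
     group G \<and> convergence_action G X act
   \<and> (\<forall>x \<in> topspace X. conical_limit_point G X act x \<or> bounded_parabolic_point G X act x)
   \<and> (\<forall>i < s. parabolic_point G X act (p i))
   \<and> (\<forall>i < s. \<forall>j < s. i \<noteq> j \<longrightarrow> p j \<notin> orbit G act (p i))
   \<and> (\<forall>x. parabolic_point G X act x \<longrightarrow> (\<exists>i < s. x \<in> orbit G act (p i)))"

definition cusp_nbhd ::
  "('g, 'b) monoid_scheme \<Rightarrow> 'a topology \<Rightarrow> ('g \<Rightarrow> 'a \<Rightarrow> 'a) \<Rightarrow> 'a \<Rightarrow> ('a \<times> 'a \<times> 'a) set \<Rightarrow> bool" where
  "cusp_nbhd G X act q B \<longleftrightarrow>
     (\<exists>K C W. compactin (compactified_triples X) K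
        \<and> compactin X C \<and> C \<subseteq> topspace X - {q}
        \<and> (\<Union>g \<in> stabilizer G act q. act g ` C) = topspace X - {q}
        \<and> openin (compactified_triples X) W \<and> Inl ` C \<subseteq> W \<and> W \<subseteq> K
        \<and> B = triples X - (\<Union>g \<in> stabilizer G act q. diag_act act g ` (Inr -` K)))"

definition orbit_space_top ::
  "('g, 'b) monoid_scheme \<Rightarrow> 'a topology \<Rightarrow> ('g \<Rightarrow> 'a \<Rightarrow> 'a) \<Rightarrow> ('a \<times> 'a \<times> 'a) set topology" where
  "orbit_space_top G X act = topology (\<lambda>U.
      U \<subseteq> orbits G (triples X) (diag_act act) \<and> openin (triple_top X) (\<Union>U))"

definition thick_part ::
  "('g, 'b) monoid_scheme \<Rightarrow> 'a topology \<Rightarrow> ('g \<Rightarrow> 'a \<Rightarrow> 'a) \<Rightarrow> nat \<Rightarrow> (nat \<Rightarrow> ('a \<times> 'a \<times> 'a) set) \<Rightarrow> ('a \<times> 'a \<times> 'a) set" where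
  "thick_part G X act s B = triples X - (\<Union>i < s. \<Union>g \<in> carrier G. diag_act act g ` B i)"

end

theory Submission
  imports Defs
begin

text \<open>Suppose no \<open>w\<close> makes \<open>(u, v, w)\<close> thick. Then every \<open>w \<noteq> u, v\<close> lies in the slice
  \<open>{w. (u, v, w) \<in> g B\<^sub>i}\<close> of some translate of a cusp neighbourhood. These slices are open, and
  they are pairwise equal or disjoint because the translates \<open>g B\<^sub>i\<close> are (\<open>B\<^sub>i\<close> is invariant under
  \<open>Stab(p\<^sub>i)\<close>). Since \<open>u\<close> and \<open>v\<close> are not parabolic, neither is a translate of some \<open>p\<^sub>i\<close>, and the
  shape of \<open>B\<^sub>i\<close> near the boundary yields a neighbourhood of \<open>{u, v}\<close> missing any given slice.
  A connected set containing \<open>u\<close>, \<open>v\<close> and a third point \<open>w\<close> would then be split by the slice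
  through \<open>w\<close> and the union of such a neighbourhood with all other slices, while \<open>{u, v}\<close> itself
  is disconnected in a \<open>T\<^sub>1\<close> space.\<close>

section \<open>The diagonal action and parabolic points\<close>

lemma group_action_act_act_inv:
  fixes G (structure)
  assumes "group_action G E act" "g \<in> carrier G" "x \<in> E"
  shows "act g (act (inv\<^bsub>G\<^esub> g) x) = x"
proof -
  interpret group G
    using group_action.group_hom[OF assms(1)] group_hom.axioms(1) by blast
  show ?thesis
    using group_action.orbit_sym_aux[OF assms(1), of "inv g" x] assms by simp
qed

lemma diag_act_mult:
  assumes "group_action G (topspace X) act" "g \<in> carrier G" "h \<in> carrier G" "t \<in> triples X"
  shows "diag_act act (g \<otimes>\<^bsub>G\<^esub> h) t = diag_act act g (diag_act act h t)"
  using assms group_action.composition_rule[OF assms(1)] by (auto simp: diag_act_def triples_def)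

lemma diag_act_inv_diag_act:
  assumes "group_action G (topspace X) act" "g \<in> carrier G" "t \<in> triples X"
  shows "diag_act act (inv\<^bsub>G\<^esub> g) (diag_act act g t) = t"
  using assms group_action.orbit_sym_aux[OF assms(1)] by (auto simp: diag_act_def triples_def)

lemma diag_act_diag_act_inv:
  assumes "group_action G (topspace X) act" "g \<in> carrier G" "t \<in> triples X"
  shows "diag_act act g (diag_act act (inv\<^bsub>G\<^esub> g) t) = t"
  using assms group_action_act_act_inv[OF assms(1,2)] by (auto simp: diag_act_def triples_def)

lemma diag_act_in_triples:
  assumes "group_action G (topspace X) act" "g \<in> carrier G" "t \<in> triples X"
  shows "diag_act act g t \<in> triples X"
  using assms group_action.element_image[OF assms(1,2)]
    inj_onD[OF group_action.inj_prop[OF assms(1,2)]]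
  by (fastforce simp: diag_act_def triples_def)

lemma (in group) nat_pow_conj:
  assumes "g \<in> carrier G" "k \<in> carrier G"
  shows "(inv g \<otimes> k \<otimes> g) [^] (n::nat) = inv g \<otimes> k [^] n \<otimes> g"
proof (induction n)
  case 0
  show ?case using assms by simp
next
  case (Suc n)
  have "g \<otimes> (inv g \<otimes> x) = x" if "x \<in> carrier G" for x
    using that assms by (simp add: m_assoc[symmetric])
  then show ?case using Suc assms by (simp add: m_assoc)
qed

lemma loxodromic_conj:
  fixes G (structure)
  assumes ga: "group_action G (topspace X) act" and g: "g \<in> carrier G"
    and lox: "loxodromic G X act k"
  shows "loxodromic G X act (inv g \<otimes> k \<otimes> g)"
proof -
  interpret group G
    using group_action.group_hom[OF ga] group_hom.axioms(1) by blast
  have k: "k \<in> carrier G" using lox unfolding loxodromic_def by blast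
  have ig: "inv g \<in> carrier G" using g by simp
  have pow: "(inv g \<otimes> k \<otimes> g) [^] n \<noteq> \<one>" if "n > 0" for n :: nat
  proof
    assume "(inv g \<otimes> k \<otimes> g) [^] n = \<one>"
    then have "g \<otimes> (inv g \<otimes> k [^] n \<otimes> g) \<otimes> inv g = \<one>"
      using nat_pow_conj[OF g k] g by simp
    then have "k [^] n = \<one>"
      using conjugation_is_surj[OF g, of "k [^] n"] k by simp
    then show False using lox that unfolding loxodromic_def by blast
  qed
  let ?F = "{x \<in> topspace X. act k x = x}"
  have conj_act: "act (inv g \<otimes> k \<otimes> g) x = act (inv g) (act k (act g x))"
    if "x \<in> topspace X" for x
    using that g ig k group_action.composition_rule[OF ga] group_action.element_image[OF ga]
    by (metis m_closed)
  have fixed: "{x \<in> topspace X. act (inv g \<otimes> k \<otimes> g) x = x} = act (inv g) ` ?F"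
  proof (intro equalityI subsetI)
    fix x assume "x \<in> {x \<in> topspace X. act (inv g \<otimes> k \<otimes> g) x = x}"
    then have x: "x \<in> topspace X" and "act (inv g) (act k (act g x)) = x"
      using conj_act by auto
    then have "act k (act g x) = act g x"
      using group_action_act_act_inv[OF ga g] group_action.element_image[OF ga] g k by metis
    moreover have "x = act (inv g) (act g x)"
      using group_action.orbit_sym_aux[OF ga g x] by simp
    ultimately show "x \<in> act (inv g) ` ?F"
      using group_action.element_image[OF ga g x] by blast
  next
    fix x assume "x \<in> act (inv g) ` ?F"
    then obtain y where y: "y \<in> topspace X" "act k y = y" "x = act (inv g) y" by blast
    then show "x \<in> {x \<in> topspace X. act (inv g \<otimes> k \<otimes> g) x = x}"
      using conj_act group_action.element_image[OF ga ig] group_action_act_act_inv[OF ga g] by auto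
  qed
  have "card (act (inv g) ` ?F) = card ?F"
    using group_action.inj_prop[OF ga ig] by (intro card_image) (auto intro: inj_on_subset)
  then show ?thesis
    using lox g k pow fixed unfolding loxodromic_def by auto
qed

lemma parabolic_point_act:
  fixes G (structure)
  assumes ga: "group_action G (topspace X) act" and g: "g \<in> carrier G"
    and par: "parabolic_point G X act q"
  shows "parabolic_point G X act (act g q)"
proof -
  interpret group G
    using group_action.group_hom[OF ga] group_hom.axioms(1) by blast
  have q: "q \<in> topspace X" using par unfolding parabolic_point_def by blast
  have ig: "inv g \<in> carrier G" using g by simp
  have gq: "act g q \<in> topspace X" using group_action.element_image[OF ga g q] by simp
  have conj_in_stab: "g \<otimes> h \<otimes> inv g \<in> stabilizer G act (act g q)"
    if "h \<in> stabilizer G act q" for h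
  proof -
    have h: "h \<in> carrier G" "act h q = q" using that unfolding stabilizer_def by auto
    have "act (g \<otimes> h \<otimes> inv g) (act g q) = act g (act h (act (inv g) (act g q)))"
      using g h ig gq group_action.composition_rule[OF ga] group_action.element_image[OF ga]
      by (metis m_closed)
    also have "\<dots> = act g q"
      using group_action.orbit_sym_aux[OF ga g q] h by simp
    finally show ?thesis using g h ig unfolding stabilizer_def by simp
  qed
  have conj_back: "inv g \<otimes> k \<otimes> g \<in> stabilizer G act q"
    if "k \<in> stabilizer G act (act g q)" for k
  proof -
    have k: "k \<in> carrier G" "act k (act g q) = act g q" using that unfolding stabilizer_def by auto
    have "act (inv g \<otimes> k \<otimes> g) q = act (inv g) (act k (act g q))"
      using g k ig q group_action.composition_rule[OF ga] group_action.element_image[OF ga]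
      by (metis m_closed)
    also have "\<dots> = q"
      using group_action.orbit_sym_aux[OF ga g q] k by simp
    finally show ?thesis using g k ig unfolding stabilizer_def by simp
  qed
  have inj: "inj_on (\<lambda>h. g \<otimes> h \<otimes> inv g) (stabilizer G act q)"
  proof (rule inj_onI)
    fix a b assume "a \<in> stabilizer G act q" "b \<in> stabilizer G act q"
      and "g \<otimes> a \<otimes> inv g = g \<otimes> b \<otimes> inv g"
    then show "a = b"
      using conjugation_is_inj[OF g] group_action.stabilizer_subset[OF ga] by blast
  qed
  have "infinite (stabilizer G act q)"
    using par unfolding parabolic_point_def by blast
  then have "infinite ((\<lambda>h. g \<otimes> h \<otimes> inv g) ` stabilizer G act q)"
    by (simp add: finite_image_iff[OF inj])
  moreover have "(\<lambda>h. g \<otimes> h \<otimes> inv g) ` stabilizer G act q \<subseteq> stabilizer G act (act g q)"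
    using conj_in_stab by blast
  ultimately have "infinite (stabilizer G act (act g q))"
    using finite_subset by blast
  moreover have "\<not> loxodromic G X act k" if "k \<in> stabilizer G act (act g q)" for k
    using loxodromic_conj[OF ga g] conj_back[OF that] par unfolding parabolic_point_def by blast
  ultimately show ?thesis
    using gq unfolding parabolic_point_def by blast
qed

section \<open>Topology of the triple space and its compactification\<close>

definition boundary_nbhd :: "'a topology \<Rightarrow> 'a set \<Rightarrow> ('a + ('a \<times> 'a \<times> 'a)) set" where
  "boundary_nbhd X U = Inl ` U \<union> Inr ` {t \<in> triples X. two_in U t}"

lemma two_in_mono: "two_in U t \<Longrightarrow> U \<subseteq> V \<Longrightarrow> two_in V t"
  unfolding two_in_def by blast

lemma boundary_nbhd_mono: "U \<subseteq> V \<Longrightarrow> boundary_nbhd X U \<subseteq> boundary_nbhd X V"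
  unfolding boundary_nbhd_def using two_in_mono by fastforce

lemma openin_compactified_triples:
  "openin (compactified_triples X) S \<longleftrightarrow>
     S \<subseteq> Inl ` topspace X \<union> Inr ` triples X \<and> openin (triple_top X) (Inr -` S)
     \<and> (\<forall>x. Inl x \<in> S \<longrightarrow> (\<exists>U. openin X U \<and> x \<in> U \<and> boundary_nbhd X U \<subseteq> S))"
  (is "_ \<longleftrightarrow> ?open S")
proof -
  have "istopology ?open"
    unfolding istopology_def
  proof (rule conjI; intro allI impI)
    fix S T assume S: "?open S" and T: "?open T"
    have "\<exists>U. openin X U \<and> x \<in> U \<and> boundary_nbhd X U \<subseteq> S \<inter> T" if x: "Inl x \<in> S \<inter> T" for x
    proof -
      obtain U where U: "openin X U" "x \<in> U" "boundary_nbhd X U \<subseteq> S"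
        using S x by blast
      obtain V where V: "openin X V" "x \<in> V" "boundary_nbhd X V \<subseteq> T"
        using T x by blast
      have "boundary_nbhd X (U \<inter> V) \<subseteq> S \<inter> T"
        using U(3) V(3) boundary_nbhd_mono[of "U \<inter> V" U X] boundary_nbhd_mono[of "U \<inter> V" V X]
        by blast
      then show ?thesis
        using U V by (intro exI[of _ "U \<inter> V"]) (simp add: openin_Int)
    qed
    moreover have "openin (triple_top X) (Inr -` (S \<inter> T))"
      using S T by (simp add: vimage_Int openin_Int)
    moreover have "S \<inter> T \<subseteq> Inl ` topspace X \<union> Inr ` triples X"
      using S by blast
    ultimately show "?open (S \<inter> T)"
      by blast
  next
    fix \<S> assume \<S>: "\<forall>S\<in>\<S>. ?open S"
    have "openin (triple_top X) (Inr -` S)" if "S \<in> \<S>" for S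
      using \<S> that by blast
    then have "openin (triple_top X) (Inr -` \<Union>\<S>)"
      unfolding vimage_Union by (intro openin_Union) blast
    moreover have "\<exists>U. openin X U \<and> x \<in> U \<and> boundary_nbhd X U \<subseteq> \<Union>\<S>" if x: "Inl x \<in> \<Union>\<S>" for x
    proof -
      obtain S where S: "S \<in> \<S>" "Inl x \<in> S" using x by blast
      then have "?open S" using \<S> by blast
      then obtain U where "openin X U" "x \<in> U" "boundary_nbhd X U \<subseteq> S"
        using S(2) by blast
      then show ?thesis using S(1) by blast
    qed
    moreover have "\<Union>\<S> \<subseteq> Inl ` topspace X \<union> Inr ` triples X"
      using \<S> by blast
    ultimately show "?open (\<Union>\<S>)"
      by blast
  qed
  moreover have "compactified_triples X = topology ?open"
    unfolding compactified_triples_def boundary_nbhd_def ..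
  ultimately have "openin (compactified_triples X) = ?open"
    by (simp add: topology_inverse')
  then show ?thesis
    by simp
qed

lemma topspace_compactified_triples:
  "topspace (compactified_triples X) \<subseteq> Inl ` topspace X \<union> Inr ` triples X"
proof -
  have "openin (compactified_triples X) (topspace (compactified_triples X))"
    by (rule openin_topspace)
  then show ?thesis
    unfolding openin_compactified_triples by (elim conjE)
qed

lemma topspace_triple_top [simp]: "topspace (triple_top X) = triples X"
  unfolding triple_top_def topspace_subtopology topspace_prod_topology triples_def by auto

lemma continuous_map_diag_act:
  assumes "continuous_map X X (act g)"
  shows "continuous_map (prod_topology X (prod_topology X X)) (prod_topology X (prod_topology X X))
           (diag_act act g)"
proof -
  let ?P = "prod_topology X (prod_topology X X)"
  have "continuous_map ?P X (\<lambda>t. act g (fst t))"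
    using continuous_map_compose[OF continuous_map_fst assms] by (simp add: o_def)
  moreover have "continuous_map ?P X (\<lambda>t. act g (fst (snd t)))"
    using continuous_map_compose[OF continuous_map_compose[OF continuous_map_snd continuous_map_fst] assms]
    by (simp add: o_def)
  moreover have "continuous_map ?P X (\<lambda>t. act g (snd (snd t)))"
    using continuous_map_compose[OF continuous_map_compose[OF continuous_map_snd continuous_map_snd] assms]
    by (simp add: o_def)
  ultimately show ?thesis
    unfolding diag_act_def by (intro continuous_map_pairedI)
qed

lemma openin_diag_act_image:
  fixes G (structure)
  assumes ga: "group_action G (topspace X) act"
    and cont: "\<forall>h\<in>carrier G. continuous_map X X (act h)"
    and g: "g \<in> carrier G" and V: "openin (triple_top X) V"
  shows "openin (triple_top X) (diag_act act g ` V)"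
proof -
  interpret group G
    using group_action.group_hom[OF ga] group_hom.axioms(1) by blast
  obtain V' where V': "openin (prod_topology X (prod_topology X X)) V'" "V = V' \<inter> triples X"
    using V unfolding triple_top_def openin_subtopology by blast
  have "diag_act act g ` V = {t \<in> triples X. diag_act act (inv g) t \<in> V'}"
  proof (intro equalityI subsetI)
    fix t assume "t \<in> diag_act act g ` V"
    then obtain t0 where "t0 \<in> V" "t = diag_act act g t0" by blast
    then show "t \<in> {t \<in> triples X. diag_act act (inv g) t \<in> V'}"
      using V'(2) diag_act_in_triples[OF ga g] diag_act_inv_diag_act[OF ga g] by auto
  next
    fix t assume t: "t \<in> {t \<in> triples X. diag_act act (inv g) t \<in> V'}"
    then have "diag_act act (inv g) t \<in> V"
      using V'(2) diag_act_in_triples[OF ga inv_closed[OF g]] by blast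
    moreover have "t = diag_act act g (diag_act act (inv g) t)"
      using t diag_act_diag_act_inv[OF ga g] by simp
    ultimately show "t \<in> diag_act act g ` V" by blast
  qed
  moreover have "continuous_map (triple_top X) (prod_topology X (prod_topology X X))
      (diag_act act (inv g))"
    unfolding triple_top_def
    using cont g by (intro continuous_map_from_subtopology continuous_map_diag_act) simp
  ultimately show ?thesis
    using openin_continuous_map_preimage[OF _ V'(1), of "triple_top X"] by simp
qed

section \<open>Slices and connectedness\<close>

definition slice :: "'a \<Rightarrow> 'a \<Rightarrow> ('a \<times> 'a \<times> 'a) set \<Rightarrow> 'a set" where
  "slice u v V = {w. (u, v, w) \<in> V}"

lemma openin_slice:
  assumes "t1_space X" "openin (triple_top X) V"
    and "u \<in> topspace X" "v \<in> topspace X" "u \<noteq> v"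
  shows "openin X (slice u v V)"
proof -
  obtain V' where V': "openin (prod_topology X (prod_topology X X)) V'" "V = V' \<inter> triples X"
    using assms(2) unfolding triple_top_def openin_subtopology by blast
  have "slice u v V = {w \<in> topspace X. (u, v, w) \<in> V'} - {u, v}"
    using assms(3-5) unfolding slice_def V'(2) triples_def by auto
  moreover have "continuous_map X (prod_topology X (prod_topology X X)) (\<lambda>w. (u, v, w))"
    using assms(3,4) by (intro continuous_map_pairedI) auto
  then have "openin X {w \<in> topspace X. (u, v, w) \<in> V'}"
    using openin_continuous_map_preimage[OF _ V'(1)] by blast
  moreover have "closedin X {u, v}"
    using assms(1,3,4) unfolding t1_space_closedin_finite by simp
  ultimately show ?thesis
    by (simp add: openin_diff)
qed

lemma pairwise_disjnt_slice:
  "pairwise disjnt \<V> \<Longrightarrow> pairwise disjnt (slice u v ` \<V>)"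
  unfolding pairwise_def disjnt_def slice_def by blast

lemma not_connectedin_pairwise_disjnt_cover:
  assumes "t1_space X" and u: "u \<in> Z" and v: "v \<in> Z" and "u \<noteq> v"
    and disj: "pairwise disjnt \<O>" and opn: "\<And>S. S \<in> \<O> \<Longrightarrow> openin X S"
    and cover: "Z - {u, v} \<subseteq> \<Union>\<O>"
    and sep: "\<And>S. S \<in> \<O> \<Longrightarrow> \<exists>N. openin X N \<and> u \<in> N \<and> v \<in> N \<and> disjnt N S"
  shows "\<not> connectedin X Z"
proof
  assume conn: "connectedin X Z"
  then have Z: "Z \<subseteq> topspace X" by (rule connectedin_subset_topspace)
  have separated: False
    if "openin X E1" "openin X E2" "Z \<subseteq> E1 \<union> E2" "E1 \<inter> E2 \<inter> Z = {}"
      "E1 \<inter> Z \<noteq> {}" "E2 \<inter> Z \<noteq> {}" for E1 E2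
    using conn that unfolding connectedin by blast
  show False
  proof (cases "Z \<subseteq> {u, v}")
    case True
    show False
    proof (rule separated)
      show "openin X (topspace X - {v})" "openin X (topspace X - {u})"
        using assms(1) u v Z by (simp_all add: openin_diff closedin_t1_singleton subsetD)
      show "Z \<subseteq> (topspace X - {v}) \<union> (topspace X - {u})"
        using Z \<open>u \<noteq> v\<close> by blast
      show "(topspace X - {v}) \<inter> (topspace X - {u}) \<inter> Z = {}"
        using True by blast
      show "(topspace X - {v}) \<inter> Z \<noteq> {}" "(topspace X - {u}) \<inter> Z \<noteq> {}"
        using u v Z \<open>u \<noteq> v\<close> by blast+
    qed
  next
    case False
    then obtain w S where w: "w \<in> Z" "w \<notin> {u, v}" and S: "S \<in> \<O>" "w \<in> S"
      using cover by blast
    obtain N where N: "openin X N" "u \<in> N" "v \<in> N" "disjnt N S"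
      using sep[OF S(1)] by blast
    define E where "E = N \<union> \<Union>(\<O> - {S})"
    show False
    proof (rule separated)
      show "openin X S" using opn[OF S(1)] .
      show "openin X E"
        unfolding E_def using N(1) opn by (intro openin_Un openin_Union) auto
      have "S \<inter> \<Union>(\<O> - {S}) = {}"
        using disj S(1) unfolding pairwise_def disjnt_def by auto
      then show "S \<inter> E \<inter> Z = {}"
        using N(4) unfolding E_def disjnt_def by blast
      show "Z \<subseteq> S \<union> E"
        using cover N unfolding E_def by blast
      show "S \<inter> Z \<noteq> {}" "E \<inter> Z \<noteq> {}"
        using w S N u unfolding E_def by blast+
    qed
  qed
qed

section \<open>Cusp neighbourhoods\<close>

lemma cusp_nbhd_subset_triples: "cusp_nbhd G X act q Bq \<Longrightarrow> Bq \<subseteq> triples X"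
  unfolding cusp_nbhd_def by blast

lemma cusp_nbhd_stabilizer_invariant:
  fixes G (structure)
  assumes ga: "group_action G (topspace X) act" and cusp: "cusp_nbhd G X act q Bq"
    and q: "q \<in> topspace X" and k: "k \<in> stabilizer G act q" and t: "t \<in> Bq"
  shows "diag_act act k t \<in> Bq"
proof -
  interpret group G
    using group_action.group_hom[OF ga] group_hom.axioms(1) by blast
  obtain K where K: "compactin (compactified_triples X) K"
    and Bq: "Bq = triples X - (\<Union>h \<in> stabilizer G act q. diag_act act h ` (Inr -` K))"
    using cusp unfolding cusp_nbhd_def by blast
  have kc: "k \<in> carrier G" using k unfolding stabilizer_def by blast
  have tT: "t \<in> triples X" using t Bq by blast
  have "diag_act act k t \<notin> diag_act act h ` (Inr -` K)" if h: "h \<in> stabilizer G act q" for h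
  proof
    assume "diag_act act k t \<in> diag_act act h ` (Inr -` K)"
    then obtain r where r: "Inr r \<in> K" "diag_act act k t = diag_act act h r" by blast
    have rT: "r \<in> triples X"
      using r(1) compactin_subset_topspace[OF K] topspace_compactified_triples by blast
    have hc: "h \<in> carrier G" using h unfolding stabilizer_def by blast
    have "t = diag_act act (inv k) (diag_act act h r)"
      using diag_act_inv_diag_act[OF ga kc tT] r(2) by simp
    also have "\<dots> = diag_act act (inv k \<otimes> h) r"
      using diag_act_mult[OF ga inv_closed[OF kc] hc rT] by simp
    finally have "t \<in> diag_act act (inv k \<otimes> h) ` (Inr -` K)"
      using r(1) by blast
    moreover have "inv k \<otimes> h \<in> stabilizer G act q"
      using group_action.stabilizer_m_closed[OF ga q group_action.stabilizer_m_inv_closed[OF ga q k] h] .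
    ultimately show False using t Bq by blast
  qed
  then show ?thesis
    using diag_act_in_triples[OF ga kc tT] Bq by blast
qed

lemma cusp_nbhd_stabilizer_image:
  fixes G (structure)
  assumes ga: "group_action G (topspace X) act" and cusp: "cusp_nbhd G X act q Bq"
    and q: "q \<in> topspace X" and k: "k \<in> stabilizer G act q"
  shows "diag_act act k ` Bq = Bq"
proof
  show "diag_act act k ` Bq \<subseteq> Bq"
    using cusp_nbhd_stabilizer_invariant[OF ga cusp q k] by blast
  have kc: "k \<in> carrier G" using k unfolding stabilizer_def by blast
  show "Bq \<subseteq> diag_act act k ` Bq"
  proof
    fix t assume t: "t \<in> Bq"
    have "diag_act act (inv k) t \<in> Bq"
      using cusp_nbhd_stabilizer_invariant[OF ga cusp q
          group_action.stabilizer_m_inv_closed[OF ga q k] t] .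
    moreover have "t \<in> triples X"
      using t cusp_nbhd_subset_triples[OF cusp] by blast
    then have "t = diag_act act k (diag_act act (inv k) t)"
      by (simp add: diag_act_diag_act_inv[OF ga kc])
    ultimately show "t \<in> diag_act act k ` Bq" by blast
  qed
qed

lemma two_in_diag_act:
  "two_in {x \<in> topspace X. act g x \<in> U} t \<Longrightarrow> two_in U (diag_act act g t)"
  unfolding two_in_def diag_act_def by auto

lemma cusp_nbhd_avoids_point:
  fixes G (structure)
  assumes ga: "group_action G (topspace X) act"
    and cont: "\<forall>h\<in>carrier G. continuous_map X X (act h)"
    and cusp: "cusp_nbhd G X act q Bq" and a: "a \<in> topspace X" "a \<noteq> q"
  shows "\<exists>N. openin X N \<and> a \<in> N \<and> (\<forall>t \<in> Bq. \<not> two_in N t)"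
proof -
  interpret group G
    using group_action.group_hom[OF ga] group_hom.axioms(1) by blast
  obtain K C W where C: "C \<subseteq> topspace X - {q}" "(\<Union>h \<in> stabilizer G act q. act h ` C) = topspace X - {q}"
    and W: "openin (compactified_triples X) W" "Inl ` C \<subseteq> W" "W \<subseteq> K"
    and Bq: "Bq = triples X - (\<Union>h \<in> stabilizer G act q. diag_act act h ` (Inr -` K))"
    using cusp unfolding cusp_nbhd_def by blast
  obtain h c where h: "h \<in> stabilizer G act q" and c: "c \<in> C" and a_eq: "a = act h c"
    using C a by blast
  have hc: "h \<in> carrier G" using h unfolding stabilizer_def by blast
  have "c \<in> topspace X" using c C by blast
  then have inv_h_a: "act (inv h) a = c"
    using group_action.orbit_sym_aux[OF ga hc] a_eq by simp
  \<comment> \<open>\<open>B\<^sub>q\<close> omits \<open>h K\<close>, which contains the \<open>h\<close>-translate of a basic neighbourhood of \<open>Inl c\<close>.\<close>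
  obtain U where U: "openin X U" "c \<in> U" "boundary_nbhd X U \<subseteq> W"
    using W(1,2) c unfolding openin_compactified_triples by blast
  define N where "N = {x \<in> topspace X. act (inv h) x \<in> U}"
  have "openin X N"
    unfolding N_def using cont hc by (intro openin_continuous_map_preimage[OF _ U(1)]) simp
  moreover have "a \<in> N" unfolding N_def using a inv_h_a U(2) by simp
  moreover have "\<not> two_in N t" if t: "t \<in> Bq" for t
  proof
    assume "two_in N t"
    then have "two_in U (diag_act act (inv h) t)"
      unfolding N_def by (rule two_in_diag_act)
    moreover have tT: "t \<in> triples X" using t Bq by blast
    ultimately have "Inr (diag_act act (inv h) t) \<in> boundary_nbhd X U"
      using diag_act_in_triples[OF ga inv_closed[OF hc]] unfolding boundary_nbhd_def by blast
    then have "diag_act act (inv h) t \<in> Inr -` K" using U(3) W(3) by blast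
    moreover have "t = diag_act act h (diag_act act (inv h) t)"
      using diag_act_diag_act_inv[OF ga hc tT] by simp
    ultimately have "t \<in> diag_act act h ` (Inr -` K)"
      by (rule rev_image_eqI)
    then show False using h t Bq by blast
  qed
  ultimately show ?thesis by blast
qed

lemma cusp_translate_avoids_point:
  fixes G (structure)
  assumes ga: "group_action G (topspace X) act"
    and cont: "\<forall>h\<in>carrier G. continuous_map X X (act h)"
    and cusp: "cusp_nbhd G X act q Bq" and g: "g \<in> carrier G"
    and a: "a \<in> topspace X" "act (inv g) a \<noteq> q"
  shows "\<exists>N. openin X N \<and> a \<in> N \<and> (\<forall>t \<in> diag_act act g ` Bq. \<not> two_in N t)"
proof -
  interpret group G
    using group_action.group_hom[OF ga] group_hom.axioms(1) by blast
  have "act (inv g) a \<in> topspace X"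
    using group_action.element_image[OF ga inv_closed[OF g] a(1) refl] .
  then obtain N0 where N0: "openin X N0" "act (inv g) a \<in> N0" "\<forall>t \<in> Bq. \<not> two_in N0 t"
    using cusp_nbhd_avoids_point[OF ga cont cusp _ a(2)] by blast
  define N where "N = {x \<in> topspace X. act (inv g) x \<in> N0}"
  have "openin X N"
    unfolding N_def using cont g by (intro openin_continuous_map_preimage[OF _ N0(1)]) simp
  moreover have "a \<in> N" unfolding N_def using a N0(2) by simp
  moreover have "\<not> two_in N (diag_act act g t)" if t: "t \<in> Bq" for t
  proof
    assume "two_in N (diag_act act g t)"
    then have "two_in N0 (diag_act act (inv g) (diag_act act g t))"
      unfolding N_def by (rule two_in_diag_act)
    moreover have "t \<in> triples X"
      using t cusp_nbhd_subset_triples[OF cusp] by blast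
    ultimately show False
      using diag_act_inv_diag_act[OF ga g] t N0(3) by simp
  qed
  ultimately show ?thesis by blast
qed

lemma bowditch_boundaryD:
  assumes "bowditch_boundary G X act s p"
  shows "group_action G (topspace X) act" "\<forall>g\<in>carrier G. continuous_map X X (act g)"
    "Hausdorff_space X" "\<And>i. i < s \<Longrightarrow> parabolic_point G X act (p i)"
  using assms unfolding bowditch_boundary_def convergence_action_def by blast+

definition cusp_translates ::
  "('g, 'b) monoid_scheme \<Rightarrow> ('g \<Rightarrow> 'a \<Rightarrow> 'a) \<Rightarrow> nat \<Rightarrow> (nat \<Rightarrow> ('a \<times> 'a \<times> 'a) set)
     \<Rightarrow> ('a \<times> 'a \<times> 'a) set set" where
  "cusp_translates G act s B = {diag_act act g ` B i | g i. g \<in> carrier G \<and> i < s}"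

lemma thick_part_eq: "thick_part G X act s B = triples X - \<Union>(cusp_translates G act s B)"
  unfolding thick_part_def cusp_translates_def by blast

lemma cusp_translates_pairwise_disjnt:
  fixes G (structure)
  assumes ga: "group_action G (topspace X) act"
    and p: "\<And>i. i < s \<Longrightarrow> p i \<in> topspace X"
    and B_cusp: "\<forall>i < s. cusp_nbhd G X act (p i) (B i)"
    and B_disj: "\<forall>i < s. \<forall>j < s. \<forall>g \<in> carrier G. \<forall>h \<in> carrier G.
        (i \<noteq> j \<or> inv g \<otimes> h \<notin> stabilizer G act (p i))
        \<longrightarrow> diag_act act g ` B i \<inter> diag_act act h ` B j = {}"
  shows "pairwise disjnt (cusp_translates G act s B)"
  unfolding cusp_translates_def
proof (rule pairwiseI)
  interpret group G
    using group_action.group_hom[OF ga] group_hom.axioms(1) by blast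
  fix V1 V2 assume "V1 \<in> {diag_act act g ` B i | g i. g \<in> carrier G \<and> i < s}"
    and "V2 \<in> {diag_act act g ` B i | g i. g \<in> carrier G \<and> i < s}" and ne: "V1 \<noteq> V2"
  then obtain g h i j where g: "g \<in> carrier G" and h: "h \<in> carrier G" and "i < s" "j < s"
    and V: "V1 = diag_act act g ` B i" "V2 = diag_act act h ` B j"
    by blast
  show "disjnt V1 V2"
  proof (cases "i \<noteq> j \<or> inv g \<otimes> h \<notin> stabilizer G act (p i)")
    case True
    then show ?thesis
      using B_disj g h \<open>i < s\<close> \<open>j < s\<close> V unfolding disjnt_def by blast
  next
    case False
    then have "j = i" and k: "inv g \<otimes> h \<in> stabilizer G act (p i)" by auto
    have cusp: "cusp_nbhd G X act (p i) (B i)" using B_cusp \<open>i < s\<close> by blast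
    have hk: "h = g \<otimes> (inv g \<otimes> h)" using g h by (simp add: m_assoc[symmetric])
    have "diag_act act h t = diag_act act g (diag_act act (inv g \<otimes> h) t)" if "t \<in> B i" for t
    proof -
      have "t \<in> triples X" using that cusp_nbhd_subset_triples[OF cusp] by blast
      then show ?thesis
        using arg_cong[OF hk, of "\<lambda>k. diag_act act k t"] diag_act_mult[OF ga g _ , of "inv g \<otimes> h" t]
          g h by simp
    qed
    then have "diag_act act h ` B i = diag_act act g ` diag_act act (inv g \<otimes> h) ` B i"
      unfolding image_image by (rule image_cong[OF refl])
    also have "\<dots> = diag_act act g ` B i"
      using cusp_nbhd_stabilizer_image[OF ga cusp p[OF \<open>i < s\<close>] k] by simp
    finally show ?thesis using ne V \<open>j = i\<close> by simp
  qed
qed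

lemma openin_cusp_translates:
  assumes bd: "bowditch_boundary G X act s p"
    and B_open: "\<forall>i < s. openin (triple_top X) (B i)" and V: "V \<in> cusp_translates G act s B"
  shows "openin (triple_top X) V"
  using V B_open bowditch_boundaryD(2)[OF bd] unfolding cusp_translates_def
  by (auto intro!: openin_diag_act_image[OF bowditch_boundaryD(1)[OF bd]])

lemma nonparabolic_pair_separated_from_cusp_translate:
  fixes G (structure)
  assumes bd: "bowditch_boundary G X act s p"
    and B_cusp: "\<forall>i < s. cusp_nbhd G X act (p i) (B i)"
    and V: "V \<in> cusp_translates G act s B"
    and u: "u \<in> topspace X" "\<not> parabolic_point G X act u"
    and v: "v \<in> topspace X" "\<not> parabolic_point G X act v"
  shows "\<exists>N. openin X N \<and> u \<in> N \<and> v \<in> N \<and> disjnt N (slice u v V)"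
proof -
  obtain g i where g: "g \<in> carrier G" and i: "i < s" and V_eq: "V = diag_act act g ` B i"
    using V unfolding cusp_translates_def by blast
  note ga = bowditch_boundaryD(1)[OF bd]
  have avoid: "\<exists>N. openin X N \<and> a \<in> N \<and> (\<forall>t \<in> diag_act act g ` B i. \<not> two_in N t)"
    if a: "a \<in> topspace X" "\<not> parabolic_point G X act a" for a
  proof (rule cusp_translate_avoids_point[OF ga bowditch_boundaryD(2)[OF bd] _ g a(1)])
    show "cusp_nbhd G X act (p i) (B i)" using B_cusp i by blast
    show "act (inv g) a \<noteq> p i"
    proof
      assume "act (inv g) a = p i"
      then have "act g (p i) = a"
        using group_action_act_act_inv[OF ga g a(1)] by simp
      then show False
        using parabolic_point_act[OF ga g bowditch_boundaryD(4)[OF bd i]] a(2) by simp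
    qed
  qed
  obtain Nu Nv where Nu: "openin X Nu" "u \<in> Nu" "\<forall>t \<in> diag_act act g ` B i. \<not> two_in Nu t"
    and Nv: "openin X Nv" "v \<in> Nv" "\<forall>t \<in> diag_act act g ` B i. \<not> two_in Nv t"
    using avoid[OF u] avoid[OF v] by blast
  have "w \<notin> Nu \<union> Nv" if "(u, v, w) \<in> diag_act act g ` B i" for w
  proof -
    have "\<not> two_in Nu (u, v, w)" "\<not> two_in Nv (u, v, w)"
      using that Nu(3) Nv(3) by blast+
    then show ?thesis using Nu(2) Nv(2) unfolding two_in_def by auto
  qed
  then show ?thesis
    using Nu(1,2) Nv(1,2) unfolding V_eq disjnt_def slice_def by (intro exI[of _ "Nu \<union> Nv"]) blast
qed

theorem lemma6p6:
  fixes G :: "('g, 'b) monoid_scheme" and X :: "'a topology" and act :: "'g \<Rightarrow> 'a \<Rightarrow> 'a"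
    and s :: nat and p :: "nat \<Rightarrow> 'a" and B :: "nat \<Rightarrow> ('a \<times> 'a \<times> 'a) set"
    and u v :: 'a
  assumes bd: "bowditch_boundary G X act s p"
    and B_open: "\<forall>i < s. openin (triple_top X) (B i)"
    and B_cusp: "\<forall>i < s. cusp_nbhd G X act (p i) (B i)"
    and B_disj: "\<forall>i < s. \<forall>j < s. \<forall>g \<in> carrier G. \<forall>h \<in> carrier G.
        (i \<noteq> j \<or> inv\<^bsub>G\<^esub> g \<otimes>\<^bsub>G\<^esub> h \<notin> stabilizer G act (p i))
        \<longrightarrow> diag_act act g ` B i \<inter> diag_act act h ` B j = {}"
    and thick_cpt: "compactin (orbit_space_top G X act)
        ((\<lambda>t. orbit G (diag_act act) t) ` thick_part G X act s B)"
    and u: "u \<in> topspace X" and v: "v \<in> topspace X" and uv: "u \<noteq> v"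
    and u_np: "\<not> parabolic_point G X act u" and v_np: "\<not> parabolic_point G X act v"
    and comp: "connected_component_of X u v"
  shows "\<exists>w \<in> topspace X. (u, v, w) \<in> thick_part G X act s B"
proof (rule ccontr)
  assume no_thick: "\<not> (\<exists>w \<in> topspace X. (u, v, w) \<in> thick_part G X act s B)"
  note ga = bowditch_boundaryD(1)[OF bd]
  have t1: "t1_space X" using Hausdorff_imp_t1_space[OF bowditch_boundaryD(3)[OF bd]] .
  have p: "p i \<in> topspace X" if "i < s" for i
    using bowditch_boundaryD(4)[OF bd that] unfolding parabolic_point_def by blast
  obtain Z where Z: "connectedin X Z" "u \<in> Z" "v \<in> Z"
    using comp unfolding connected_component_of_def by blast
  have "\<not> connectedin X Z"
  proof (rule not_connectedin_pairwise_disjnt_cover[OF t1 Z(2,3) uv])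
    show "pairwise disjnt (slice u v ` cusp_translates G act s B)"
      by (rule pairwise_disjnt_slice[OF cusp_translates_pairwise_disjnt[OF ga p B_cusp B_disj]])
    show "openin X S" if "S \<in> slice u v ` cusp_translates G act s B" for S
      using that openin_slice[OF t1 openin_cusp_translates[OF bd B_open] u v uv] by blast
    show "\<exists>N. openin X N \<and> u \<in> N \<and> v \<in> N \<and> disjnt N S"
      if "S \<in> slice u v ` cusp_translates G act s B" for S
      using that nonparabolic_pair_separated_from_cusp_translate[OF bd B_cusp _ u u_np v v_np] by blast
    have "(u, v, w) \<in> triples X" if "w \<in> Z - {u, v}" for w
      using that connectedin_subset_topspace[OF Z(1)] u v uv unfolding triples_def by auto
    then show "Z - {u, v} \<subseteq> \<Union>(slice u v ` cusp_translates G act s B)"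
      using no_thick connectedin_subset_topspace[OF Z(1)]
      unfolding thick_part_eq slice_def by blast
  qed
  then show False using Z(1) by contradiction
qed

end
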